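(* Let $\mathbf{\Omega} \in \mathbb{R}^{p \times p}$ be symmetric positive definite, $\mathbf{x} \in \mathbb{R}^p$ and $\epsilon > 0$, and consider $$\sup_{\mathbf{\Delta} \in \mathbb{R}^p,\ \|\mathbf{\Delta}\|_2 \leq \epsilon} (\mathbf{x} + \mathbf{\Delta})^{\intercal}\mathbf{\Omega}(\mathbf{x} + \mathbf{\Delta}).$$ Let $\mu^{\star} \in \mathbb{R}$ be an optimal solution of the one-dimensional problem $$\max_{\mu}\ -\tfrac{1}{2}\mathbf{x}^{\intercal}\mathbf{\Omega}(\mu\mathbf{I} - \mathbf{\Omega})^{-1}\mathbf{\Omega}\mathbf{x} - \tfrac{\mu\epsilon^2}{2} \quad \text{subject to } \mu\mathbf{I} - \mathbf{\Omega} \succeq 0,$$ with $\mu^{\star}\mathbf{I} - \mathbf{\Omega}$ invertible. Then $\mathbf{\Delta}^{\star} = (\mu^{\star}\mathbf{I} - \mathbf{\Omega})^{-1}\mathbf{\Omega}\mathbf{x}$ is an optimal solution of the first problem.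
   Context: $\mathbf{I}$ is the $p \times p$ identity and $\succeq 0$ denotes positive semidefiniteness. *)

theory Defs
  imports "HOL-Analysis.Analysis"
begin

definition psd_mat :: "real^'n^'n \<Rightarrow> bool" where
  "psd_mat A \<longleftrightarrow> (\<forall>v. 0 \<le> v \<bullet> (A *v v))"

definition pd_mat :: "real^'n^'n \<Rightarrow> bool" where
  "pd_mat A \<longleftrightarrow> (\<forall>v. v \<noteq> 0 \<longrightarrow> 0 < v \<bullet> (A *v v))"

definition quad_obj :: "real^'n^'n \<Rightarrow> real^'n \<Rightarrow> real^'n \<Rightarrow> real" where
  "quad_obj \<Omega> x \<Delta> = (x + \<Delta>) \<bullet> (\<Omega> *v (x + \<Delta>))"

definition dual_obj :: "real^'n^'n \<Rightarrow> real^'n \<Rightarrow> real \<Rightarrow> real \<Rightarrow> real" where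
  "dual_obj \<Omega> x \<epsilon> \<mu> =
     - (1/2) * (x \<bullet> (\<Omega> *v (matrix_inv (mat \<mu> - \<Omega>) *v (\<Omega> *v x)))) - \<mu> * \<epsilon>\<^sup>2 / 2"

end

theory Submission
  imports Defs
begin

(* Write d(\<mu>) = (\<mu> I - \<Omega>)\<^sup>-\<^sup>1 \<Omega> x, i.e. resolvent \<Omega> \<mu> (\<Omega> x) below.
   The dual objective is -1/2 x\<^sup>T \<Omega> d(\<mu>) - \<mu> \<epsilon>\<^sup>2/2, and by the resolvent identity its
   derivative in \<mu> is (|d(\<mu>)|\<^sup>2 - \<epsilon>\<^sup>2)/2. Since \<mu>s I - \<Omega> is psd and invertible, hence positive
   definite, small perturbations of \<mu>s stay feasible, so optimality of \<mu>s forces |d(\<mu>s)| = \<epsilon>.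
   Then d = d(\<mu>s) satisfies the KKT conditions \<Omega> (x + d) = \<mu>s d, \<mu>s \<ge> 0, |d| = \<epsilon> together
   with the second-order condition \<mu>s I - \<Omega> psd, and expanding the quadratic around d shows
   that these make d a global maximiser over the ball. *)

lemma mat_mult_vector: "mat m *v (v::real^'n) = m *\<^sub>R v"
  by (simp add: vec_eq_iff matrix_vector_mult_def mat_def if_distrib if_distribR cong del: if_weak_cong)

lemma transpose_diff: "transpose (A - B) = transpose A - transpose (B :: 'a::ab_group_add^'n^'m)"
  by (simp add: transpose_def vec_eq_iff)

lemma inner_shifted_matrix: "v \<bullet> ((mat \<mu> - \<Omega>) *v v) = \<mu> * (v \<bullet> v) - v \<bullet> (\<Omega> *v v)"
  by (simp add: matrix_vector_mult_diff_rdistrib mat_mult_vector inner_diff_right)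

lemma symmetric_matrix_inner:
  fixes A :: "real^'n^'n"
  assumes "transpose A = A"
  shows "u \<bullet> (A *v v) = (A *v u) \<bullet> v"
  by (metis assms dot_lmul_matrix transpose_matrix_vector)

lemma matrix_inv_solves:
  fixes A :: "'a::field^'n^'n"
  assumes "invertible A"
  shows "A *v (matrix_inv A *v y) = y"
proof -
  have "A ** matrix_inv A = mat 1"
    using assms unfolding invertible_def matrix_inv_def by (metis (mono_tags, lifting) someI_ex)
  then show ?thesis
    by (simp add: matrix_vector_mul_assoc)
qed

lemma invertible_iff_ker_0:
  fixes A :: "'a::field^'n^'n"
  shows "invertible A \<longleftrightarrow> (\<forall>v. A *v v = 0 \<longrightarrow> v = 0)"
  by (simp add: invertible_left_inverse matrix_left_invertible_ker)

lemma linear_le_quadratic_imp_eq_0: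
  fixes E K c :: real
  assumes "c > 0" and le: "\<And>s. \<bar>s\<bar> \<le> c \<Longrightarrow> s * E \<le> K * s\<^sup>2"
  shows "E = 0"
proof -
  have "\<bar>E\<bar> \<le> e" if "e > 0" for e
  proof -
    define t where "t = min c (e / (\<bar>K\<bar> + 1))"
    have t: "0 < t" "t \<le> c"
      using \<open>c > 0\<close> \<open>e > 0\<close> by (auto simp: t_def)
    have "t * E \<le> t * (K * t)" "t * (- E) \<le> t * (K * t)"
      using le[of t] le[of "- t"] t by (auto simp: power2_eq_square algebra_simps)
    then have "E \<le> K * t" "- E \<le> K * t"
      using t(1) by (meson mult_left_le_imp_le)+
    then have "\<bar>E\<bar> \<le> K * t"
      by linarith
    also have "\<dots> \<le> (\<bar>K\<bar> + 1) * t"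
      using t by (intro mult_right_mono) auto
    also have "\<dots> \<le> e"
    proof -
      have "t \<le> e / (\<bar>K\<bar> + 1)"
        by (simp add: t_def)
      then show ?thesis
        by (simp add: pos_le_divide_eq mult.commute)
    qed
    finally show ?thesis .
  qed
  then show ?thesis
    by (metis abs_le_zero_iff field_le_epsilon add_0)
qed

lemma psd_quadratic_zero_imp_null:
  fixes A :: "real^'n^'n"
  assumes sym: "transpose A = A" and psd: "psd_mat A" and zero: "v \<bullet> (A *v v) = 0"
  shows "A *v v = 0"
proof -
  define w where "w = A *v v"
  have "s * (2 * (w \<bullet> w)) \<le> (w \<bullet> (A *v w)) * s\<^sup>2" for s
  proof -
    have "0 \<le> (v - s *\<^sub>R w) \<bullet> (A *v (v - s *\<^sub>R w))"
      using psd unfolding psd_mat_def by blast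
    also have "\<dots> = v \<bullet> (A *v v) - s * (v \<bullet> (A *v w)) - s * (w \<bullet> w) + s\<^sup>2 * (w \<bullet> (A *v w))"
      by (simp add: w_def power2_eq_square algebra_simps)
    also have "v \<bullet> (A *v w) = w \<bullet> w"
      using symmetric_matrix_inner[OF sym] by (simp add: w_def)
    finally show ?thesis
      using zero by (simp add: algebra_simps)
  qed
  then have "2 * (w \<bullet> w) = 0"
    by (intro linear_le_quadratic_imp_eq_0[of 1]) auto
  then show ?thesis
    by (simp add: w_def)
qed

lemma pd_mat_if_psd_invertible:
  fixes A :: "real^'n^'n"
  assumes "transpose A = A" and "psd_mat A" and "invertible A"
  shows "pd_mat A"
  unfolding pd_mat_def
proof (intro allI impI)
  fix v :: "real^'n"
  assume "v \<noteq> 0"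
  then have "A *v v \<noteq> 0"
    using assms(3) invertible_iff_ker_0 by blast
  then have "v \<bullet> (A *v v) \<noteq> 0"
    using psd_quadratic_zero_imp_null assms(1,2) by blast
  moreover have "0 \<le> v \<bullet> (A *v v)"
    using assms(2) unfolding psd_mat_def by blast
  ultimately show "0 < v \<bullet> (A *v v)"
    by linarith
qed

lemma pd_imp_psd_mat: "pd_mat A \<Longrightarrow> psd_mat A"
  unfolding pd_mat_def psd_mat_def by (metis less_le inner_zero_left order_refl)

lemma pd_mat_coercive:
  fixes A :: "real^'n^'n"
  assumes "pd_mat A"
  obtains c where "c > 0" and "\<And>v. c * (v \<bullet> v) \<le> v \<bullet> (A *v v)"
proof -
  define q where "q v = v \<bullet> (A *v v)" for v :: "real^'n"
  have "continuous_on (sphere 0 1) q"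
    unfolding q_def by (intro continuous_intros continuous_on_id linear_continuous_on) auto
  moreover have "sphere (0::real^'n) 1 \<noteq> {}"
    by simp
  ultimately obtain v0 where v0: "v0 \<in> sphere 0 1" and min: "\<And>u. u \<in> sphere 0 1 \<Longrightarrow> q v0 \<le> q u"
    using continuous_attains_inf[OF compact_sphere] by blast
  have "v0 \<noteq> 0"
    using v0 by auto
  then have "q v0 > 0"
    using assms unfolding pd_mat_def q_def by blast
  moreover have "q v0 * (v \<bullet> v) \<le> q v" for v
  proof (cases "v = 0")
    case False
    define u where "u = (1 / norm v) *\<^sub>R v"
    have "u \<in> sphere 0 1" and "v = norm v *\<^sub>R u"
      using False by (auto simp: u_def)
    then have "q v = (v \<bullet> v) * q u"
      by (metis q_def matrix_vector_mult_scaleR inner_scaleR_left inner_scaleR_right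
          power2_norm_eq_inner power2_eq_square mult.assoc)
    then show ?thesis
      using mult_right_mono[OF min[OF \<open>u \<in> sphere 0 1\<close>] inner_ge_zero[of v]] by (simp add: mult.commute)
  qed (simp add: q_def)
  ultimately show thesis
    using that unfolding q_def by blast
qed

lemma coercive_matrix_norm_le:
  fixes A :: "real^'n^'n"
  assumes "\<And>v. c * (v \<bullet> v) \<le> v \<bullet> (A *v v)"
  shows "c * norm v \<le> norm (A *v v)"
proof (cases "v = 0")
  case False
  have "norm v * (c * norm v) \<le> norm v * norm (A *v v)"
    using assms[of v] norm_cauchy_schwarz[of v "A *v v"]
    by (simp add: power2_norm_eq_inner[symmetric] power2_eq_square mult.left_commute)
  then show ?thesis
    using False by simp
qed simp

lemma coercive_matrix_psd_invertible:
  fixes A :: "real^'n^'n"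
  assumes "c > 0" and coercive: "\<And>v. c * (v \<bullet> v) \<le> v \<bullet> (A *v v)"
  shows "psd_mat A" and "invertible A"
proof -
  show "psd_mat A"
    unfolding psd_mat_def using coercive \<open>c > 0\<close> by (meson order_trans mult_nonneg_nonneg inner_ge_zero less_imp_le)
  show "invertible A"
    unfolding invertible_iff_ker_0
    using coercive_matrix_norm_le[OF coercive] \<open>c > 0\<close> by (metis norm_zero norm_le_zero_iff zero_less_mult_iff not_le)
qed

definition resolvent :: "real^'n^'n \<Rightarrow> real \<Rightarrow> real^'n \<Rightarrow> real^'n" where
  "resolvent \<Omega> \<mu> b = matrix_inv (mat \<mu> - \<Omega>) *v b"

lemma resolvent_solves:
  assumes "invertible (mat \<mu> - \<Omega>)"
  shows "\<mu> *\<^sub>R resolvent \<Omega> \<mu> b - \<Omega> *v resolvent \<Omega> \<mu> b = b"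
  using matrix_inv_solves[OF assms, of b]
  by (simp add: resolvent_def matrix_vector_mult_diff_rdistrib mat_mult_vector)

lemma coercive_resolvent_norm_le:
  assumes "c > 0" and "\<And>v. c * (v \<bullet> v) \<le> v \<bullet> ((mat \<mu> - \<Omega>) *v v)"
  shows "c * norm (resolvent \<Omega> \<mu> y) \<le> norm y"
  using coercive_matrix_norm_le[OF assms(2), of "resolvent \<Omega> \<mu> y"]
    matrix_inv_solves[OF coercive_matrix_psd_invertible(2)[OF assms]]
  by (simp add: resolvent_def)

lemma coercive_shift:
  assumes "\<And>v. c * (v \<bullet> v) \<le> v \<bullet> ((mat \<mu> - \<Omega>) *v v)" and "s \<le> c / 2"
  shows "c / 2 * (v \<bullet> v) \<le> v \<bullet> ((mat (\<mu> - s) - \<Omega>) *v v)"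
proof -
  have "s * (v \<bullet> v) \<le> c / 2 * (v \<bullet> v)"
    using assms(2) by (intro mult_right_mono) auto
  then show ?thesis
    using assms(1)[of v] unfolding inner_shifted_matrix by (simp add: algebra_simps)
qed

lemma resolvent_unique:
  assumes "invertible (mat \<mu> - \<Omega>)" and "\<mu> *\<^sub>R d - \<Omega> *v d = b"
  shows "resolvent \<Omega> \<mu> b = d"
proof -
  have "(mat \<mu> - \<Omega>) *v resolvent \<Omega> \<mu> b = (mat \<mu> - \<Omega>) *v d"
    using resolvent_solves[OF assms(1)] assms(2)
    by (simp add: matrix_vector_mult_diff_rdistrib mat_mult_vector)
  then show ?thesis
    using inj_matrix_vector_mult[OF assms(1)] by (simp add: inj_eq)
qed

lemma resolvent_identity:
  assumes "invertible (mat \<mu> - \<Omega>)" and "invertible (mat \<nu> - \<Omega>)"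
  shows "resolvent \<Omega> \<nu> b = resolvent \<Omega> \<mu> b + (\<mu> - \<nu>) *\<^sub>R resolvent \<Omega> \<nu> (resolvent \<Omega> \<mu> b)"
proof (rule resolvent_unique[OF assms(2)])
  define d u where "d = resolvent \<Omega> \<mu> b" and "u = resolvent \<Omega> \<nu> d"
  have "\<nu> *\<^sub>R (d + (\<mu> - \<nu>) *\<^sub>R u) - \<Omega> *v (d + (\<mu> - \<nu>) *\<^sub>R u)
          = (\<nu> *\<^sub>R d - \<Omega> *v d) + (\<mu> - \<nu>) *\<^sub>R (\<nu> *\<^sub>R u - \<Omega> *v u)"
    by (simp add: algebra_simps)
  also have "\<dots> = \<mu> *\<^sub>R d - \<Omega> *v d"
    using resolvent_solves[OF assms(2), of d] by (simp add: u_def algebra_simps)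
  also have "\<dots> = b"
    using resolvent_solves[OF assms(1), of b] by (simp add: d_def)
  finally show "\<nu> *\<^sub>R (d + (\<mu> - \<nu>) *\<^sub>R u) - \<Omega> *v (d + (\<mu> - \<nu>) *\<^sub>R u) = b" .
qed

lemma inner_resolvent_diff:
  assumes sym: "transpose \<Omega> = \<Omega>"
    and "invertible (mat \<mu> - \<Omega>)" and "invertible (mat \<nu> - \<Omega>)"
  shows "b \<bullet> resolvent \<Omega> \<nu> b - b \<bullet> resolvent \<Omega> \<mu> b
           = (\<mu> - \<nu>) * (resolvent \<Omega> \<mu> b \<bullet> resolvent \<Omega> \<nu> b)"
proof -
  define d e where "d = resolvent \<Omega> \<mu> b" and "e = resolvent \<Omega> \<nu> b"
  have "b \<bullet> e = \<mu> * (d \<bullet> e) - (\<Omega> *v d) \<bullet> e"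
    using resolvent_solves[OF assms(2), of b] by (metis d_def inner_diff_left inner_scaleR_left)
  moreover have "b \<bullet> d = \<nu> * (e \<bullet> d) - (\<Omega> *v e) \<bullet> d"
    using resolvent_solves[OF assms(3), of b] by (metis e_def inner_diff_left inner_scaleR_left)
  moreover have "(\<Omega> *v d) \<bullet> e = (\<Omega> *v e) \<bullet> d"
    using symmetric_matrix_inner[OF sym] by (metis inner_commute)
  ultimately show ?thesis
    unfolding d_def e_def by (simp add: inner_commute algebra_simps)
qed

lemma dual_obj_eq:
  assumes "transpose \<Omega> = \<Omega>"
  shows "dual_obj \<Omega> x \<epsilon> \<mu> = - (1/2) * ((\<Omega> *v x) \<bullet> resolvent \<Omega> \<mu> (\<Omega> *v x)) - \<mu> * \<epsilon>\<^sup>2 / 2"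
  unfolding dual_obj_def resolvent_def using symmetric_matrix_inner[OF assms] by simp

lemma shift_nonneg_if_psd:
  fixes \<Omega> :: "real^'n^'n"
  assumes "psd_mat \<Omega>" and "psd_mat (mat \<mu> - \<Omega>)"
  shows "0 \<le> \<mu>"
proof -
  obtain i :: 'n where True by blast
  let ?e = "axis i (1::real)"
  have "0 \<le> ?e \<bullet> ((mat \<mu> - \<Omega>) *v ?e)" and "0 \<le> ?e \<bullet> (\<Omega> *v ?e)"
    using assms unfolding psd_mat_def by blast+
  then show ?thesis
    by (simp add: inner_shifted_matrix inner_axis_axis)
qed

lemma quad_obj_le_if_kkt:
  fixes \<Omega> :: "real^'n^'n"
  assumes sym: "transpose \<Omega> = \<Omega>" and psd: "psd_mat (mat \<mu> - \<Omega>)" and "0 \<le> \<mu>"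
    and stationary: "\<Omega> *v (x + d) = \<mu> *\<^sub>R d" and "norm \<Delta> \<le> norm d"
  shows "quad_obj \<Omega> x \<Delta> \<le> quad_obj \<Omega> x d"
proof -
  define h where "h = \<Delta> - d"
  have "quad_obj \<Omega> x \<Delta> = quad_obj \<Omega> x d + 2 * (h \<bullet> (\<Omega> *v (x + d))) + h \<bullet> (\<Omega> *v h)"
    using symmetric_matrix_inner[OF sym, of "x + d" h]
    unfolding quad_obj_def h_def
    by (simp add: matrix_vector_right_distrib matrix_vector_mult_diff_distrib
        inner_add_left inner_add_right inner_diff_left inner_diff_right inner_commute)
  also have "\<dots> = quad_obj \<Omega> x d + 2 * \<mu> * (h \<bullet> d) + h \<bullet> (\<Omega> *v h)"
    using stationary by simp
  also have "\<dots> \<le> quad_obj \<Omega> x d + \<mu> * (2 * (h \<bullet> d) + h \<bullet> h)"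
  proof -
    have "h \<bullet> (\<Omega> *v h) \<le> \<mu> * (h \<bullet> h)"
      using psd inner_shifted_matrix[of h \<mu> \<Omega>] unfolding psd_mat_def by (metis diff_ge_0_iff_ge)
    then show ?thesis
      by (simp add: distrib_left)
  qed
  also have "\<dots> \<le> quad_obj \<Omega> x d"
  proof -
    have "\<Delta> \<bullet> \<Delta> = d \<bullet> d + (2 * (h \<bullet> d) + h \<bullet> h)"
      by (simp add: h_def inner_diff_left inner_diff_right inner_commute)
    moreover have "\<Delta> \<bullet> \<Delta> \<le> d \<bullet> d"
      using \<open>norm \<Delta> \<le> norm d\<close> by (simp add: power2_norm_eq_inner[symmetric] power_mono)
    ultimately show ?thesis
      using \<open>0 \<le> \<mu>\<close> by (simp add: mult_nonneg_nonpos)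
  qed
  finally show ?thesis .
qed

lemma dual_optimum_resolvent_norm:
  fixes \<Omega> :: "real^'n^'n"
  assumes sym: "transpose \<Omega> = \<Omega>" and "0 \<le> \<epsilon>"
    and psd: "psd_mat (mat \<mu>s - \<Omega>)" and inv: "invertible (mat \<mu>s - \<Omega>)"
    and opt: "\<And>\<mu>. psd_mat (mat \<mu> - \<Omega>) \<Longrightarrow> invertible (mat \<mu> - \<Omega>) \<Longrightarrow>
           dual_obj \<Omega> x \<epsilon> \<mu> \<le> dual_obj \<Omega> x \<epsilon> \<mu>s"
  shows "norm (resolvent \<Omega> \<mu>s (\<Omega> *v x)) = \<epsilon>"
proof -
  define b d where "b = \<Omega> *v x" and "d = resolvent \<Omega> \<mu>s b"
  have "transpose (mat \<mu>s - \<Omega>) = mat \<mu>s - \<Omega>"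
    using sym by (simp add: transpose_diff)
  then obtain c where "c > 0" and coercive: "\<And>v. c * (v \<bullet> v) \<le> v \<bullet> ((mat \<mu>s - \<Omega>) *v v)"
    using pd_mat_coercive pd_mat_if_psd_invertible psd inv by metis
  define K where "K = norm d * (norm d / (c / 2))"
  \<comment> \<open>By the resolvent identity, replacing \<open>\<mu>s\<close> by \<open>\<mu>s - s\<close> changes the dual objective by
      \<open>s/2 (\<epsilon>\<^sup>2 - d \<bullet> d)\<close> up to a term bounded by \<open>K s\<^sup>2 / 2\<close>.\<close>
  have perturbation: "s * (\<epsilon>\<^sup>2 - d \<bullet> d) \<le> K * s\<^sup>2" if "\<bar>s\<bar> \<le> c / 2" for s
  proof -
    define \<nu> where "\<nu> = \<mu>s - s"
    have coercive_\<nu>: "c / 2 * (v \<bullet> v) \<le> v \<bullet> ((mat \<nu> - \<Omega>) *v v)" for v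
      using coercive_shift[OF coercive] that by (simp add: \<nu>_def)
    then have feasible: "psd_mat (mat \<nu> - \<Omega>)" "invertible (mat \<nu> - \<Omega>)"
      using coercive_matrix_psd_invertible[of "c / 2"] \<open>c > 0\<close> by auto
    have "dual_obj \<Omega> x \<epsilon> \<nu> \<le> dual_obj \<Omega> x \<epsilon> \<mu>s"
      using opt feasible by blast
    then have "s * \<epsilon>\<^sup>2 \<le> b \<bullet> resolvent \<Omega> \<nu> b - b \<bullet> d"
      unfolding dual_obj_eq[OF sym] b_def d_def \<nu>_def by (simp add: field_simps)
    also have "\<dots> = s * (d \<bullet> resolvent \<Omega> \<nu> b)"
      using inner_resolvent_diff[OF sym inv feasible(2), of b] by (simp add: d_def \<nu>_def)
    finally have "s * \<epsilon>\<^sup>2 \<le> s * (d \<bullet> resolvent \<Omega> \<nu> b)" .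
    moreover have "d \<bullet> resolvent \<Omega> \<nu> b = d \<bullet> d + s * (d \<bullet> resolvent \<Omega> \<nu> d)"
      using resolvent_identity[OF inv feasible(2), of b] by (simp add: d_def \<nu>_def inner_add_right)
    moreover have "\<bar>d \<bullet> resolvent \<Omega> \<nu> d\<bar> \<le> K"
    proof -
      have "c / 2 * norm (resolvent \<Omega> \<nu> d) \<le> norm d"
        using coercive_resolvent_norm_le[OF _ coercive_\<nu>] \<open>c > 0\<close> by simp
      then have "norm (resolvent \<Omega> \<nu> d) \<le> norm d / (c / 2)"
        using \<open>c > 0\<close> by (simp add: pos_le_divide_eq mult.commute)
      then show ?thesis
        unfolding K_def using Cauchy_Schwarz_ineq2[of d] by (meson mult_left_mono norm_ge_zero order_trans)
    qed
    then have "s\<^sup>2 * (d \<bullet> resolvent \<Omega> \<nu> d) \<le> K * s\<^sup>2"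
      by (metis abs_le_D1 mult.commute mult_right_mono zero_le_power2)
    ultimately show ?thesis
      by (simp add: power2_eq_square algebra_simps)
  qed
  have "\<epsilon>\<^sup>2 - d \<bullet> d = 0"
  proof (rule linear_le_quadratic_imp_eq_0)
    show "0 < c / 2"
      using \<open>c > 0\<close> by simp
    show "s * (\<epsilon>\<^sup>2 - d \<bullet> d) \<le> K * s\<^sup>2" if "\<bar>s\<bar> \<le> c / 2" for s
      by (rule perturbation[OF that])
  qed
  then show ?thesis
    using \<open>0 \<le> \<epsilon>\<close> by (simp add: d_def b_def power2_norm_eq_inner[symmetric])
qed

theorem theorem5:
  fixes \<Omega> :: "real^'p^'p" and x :: "real^'p" and \<epsilon> \<mu>s :: real
  assumes "transpose \<Omega> = \<Omega>" and "pd_mat \<Omega>" and "\<epsilon> > 0"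
    and "psd_mat (mat \<mu>s - \<Omega>)" and "invertible (mat \<mu>s - \<Omega>)"
    and "\<And>\<mu>. psd_mat (mat \<mu> - \<Omega>) \<Longrightarrow> invertible (mat \<mu> - \<Omega>) \<Longrightarrow>
           dual_obj \<Omega> x \<epsilon> \<mu> \<le> dual_obj \<Omega> x \<epsilon> \<mu>s"
  shows "norm (matrix_inv (mat \<mu>s - \<Omega>) *v (\<Omega> *v x)) \<le> \<epsilon> \<and>
         (\<forall>\<Delta>. norm \<Delta> \<le> \<epsilon> \<longrightarrow>
            quad_obj \<Omega> x \<Delta> \<le> quad_obj \<Omega> x (matrix_inv (mat \<mu>s - \<Omega>) *v (\<Omega> *v x)))"
proof -
  define d where "d = resolvent \<Omega> \<mu>s (\<Omega> *v x)"
  have "norm d = \<epsilon>"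
    using dual_optimum_resolvent_norm[of \<Omega> \<epsilon> \<mu>s x] assms by (simp add: d_def)
  moreover have "\<Omega> *v (x + d) = \<mu>s *\<^sub>R d"
    using resolvent_solves[OF assms(5), of "\<Omega> *v x"]
    by (simp add: d_def algebra_simps)
  moreover have "0 \<le> \<mu>s"
    using shift_nonneg_if_psd pd_imp_psd_mat assms(2,4) by blast
  ultimately show ?thesis
    using quad_obj_le_if_kkt[OF assms(1,4)] by (simp add: d_def resolvent_def)
qed

end
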